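(* For every conjunctive query $q$: (a) if $q_1,\dots,q_c$ are the connected components of $q$, then $\chi(q)=\sum_{i=1}^c\chi(q_i)$; (b) for any $M\subseteq\mathrm{atoms}(q)$, $\chi(q/M)=\chi(q)-\chi(M)$; (c) $\chi(q)\le 0$; (d) for any $M\subseteq\mathrm{atoms}(q)$, $\chi(q)\le\chi(q/M)$.
   Context: A conjunctive query $q=S_1(\bar x_1),\dots,S_\ell(\bar x_\ell)$ consists of atoms over distinct relation symbols, $S_j$ having arity $a_j$ (number of argument positions; variables may repeat within an atom). Its hypergraph has the variables as vertices and a hyperedge $\mathrm{vars}(S_j)$ per atom; connected components are the maximal connected subqueries. The characteristic is $\chi(q)=k+\ell-\sum_j a_j-c$, where $k$ is the number of distinct variables, $\ell$ the number of atoms and $c$ the number of connected components. For a set $M$ of atoms, $\chi(M)$ is the characteristic of the query consisting of the atoms in $M$. The contraction $q/M$ is obtained by, for each connected component of (the hypergraph of) $M$, identifying all its variables into a single variable, and deleting the atoms of $M$; the remaining atoms keep their arities. E.g. for $L_5=S_1(x_0,x_1),\dots,S_5(x_4,x_5)$, $L_5/\{S_2,S_4\}=S_1(x_0,x_1),S_3(x_1,x_3),S_5(x_3,x_5)$. *)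

theory Defs
  imports Main
begin

text \<open>A conjunctive query is given by a finite set A of (distinct) relation symbols,
  the atoms, together with the argument list args r of each atom r (its arity is
  length (args r); variables may repeat).  Arguments of symbols outside A are ignored.\<close>

definition qvars :: "'r set \<Rightarrow> ('r \<Rightarrow> 'v list) \<Rightarrow> 'v set" where
  "qvars A args = (\<Union>r\<in>A. set (args r))"

definition adj_rel :: "'r set \<Rightarrow> ('r \<Rightarrow> 'v list) \<Rightarrow> ('r \<times> 'r) set" where
  "adj_rel A args = {(r, s). r \<in> A \<and> s \<in> A \<and> set (args r) \<inter> set (args s) \<noteq> {}}"

definition conn_rel :: "'r set \<Rightarrow> ('r \<Rightarrow> 'v list) \<Rightarrow> ('r \<times> 'r) set" where
  "conn_rel A args = (Id_on A \<union> adj_rel A args)\<^sup>+"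

definition components :: "'r set \<Rightarrow> ('r \<Rightarrow> 'v list) \<Rightarrow> 'r set set" where
  "components A args = A // conn_rel A args"

definition chi :: "'r set \<Rightarrow> ('r \<Rightarrow> 'v list) \<Rightarrow> int" where
  "chi A args = int (card (qvars A args)) + int (card A)
     - (\<Sum>r\<in>A. int (length (args r))) - int (card (components A args))"

text \<open>Contraction q/M: each variable x is mapped to the set of variables of the
  connected component of M containing it (if any), otherwise to {x}.  Thus all variables
  of one component of M are identified into a single new variable.\<close>
definition contr_var :: "'r set \<Rightarrow> ('r \<Rightarrow> 'v list) \<Rightarrow> 'v \<Rightarrow> 'v set" where
  "contr_var M args x =
     (if \<exists>C\<in>components M args. x \<in> qvars C args
      then qvars (THE C. C \<in> components M args \<and> x \<in> qvars C args) args
      else {x})"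

definition contr_atoms :: "'r set \<Rightarrow> 'r set \<Rightarrow> 'r set" where
  "contr_atoms A M = A - M"

definition contr_args :: "'r set \<Rightarrow> ('r \<Rightarrow> 'v list) \<Rightarrow> 'r \<Rightarrow> 'v set list" where
  "contr_args M args = (\<lambda>r. map (contr_var M args) (args r))"

end

theory Submission
  imports Defs
begin

text \<open>Each of the four terms of chi is additive over connected components, which gives (a).
  For (b), let t be the number of components of M sharing a variable with q - M. Contraction
  merges the variables of each such component into one and keeps all variables outside M,
  so k(q/M) + k(M) = k(q) + t. The components of q not contained in M correspond to those of
  q/M by removing M, and the components of q inside M are the remaining components of M, so
  c(q/M) + c(M) = c(q) + t as well; atoms and arities are simply removed. Then (c) follows by
  induction, contracting one atom r at a time, as chi of a single atom is
  |vars r| - a_r \<le> 0; and (d) follows from (b) and (c).\<close>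

section \<open>Connectivity and components\<close>

lemma conn_rel_subset: "conn_rel B args \<subseteq> B \<times> B"
proof -
  have "Id_on B \<union> adj_rel B args \<subseteq> B \<times> B" unfolding adj_rel_def by auto
  then show ?thesis unfolding conn_rel_def by (rule trancl_subset_Sigma)
qed

lemma conn_rel_refl: "r \<in> B \<Longrightarrow> (r, r) \<in> conn_rel B args"
  unfolding conn_rel_def by (rule r_into_trancl) auto

lemma conn_rel_adjI:
  "r \<in> B \<Longrightarrow> s \<in> B \<Longrightarrow> set (args r) \<inter> set (args s) \<noteq> {} \<Longrightarrow> (r, s) \<in> conn_rel B args"
  unfolding conn_rel_def adj_rel_def by (rule r_into_trancl) auto

lemma conn_rel_trans:
  "(r, s) \<in> conn_rel B args \<Longrightarrow> (s, t) \<in> conn_rel B args \<Longrightarrow> (r, t) \<in> conn_rel B args"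
  unfolding conn_rel_def by (rule trancl_trans)

lemma equiv_conn_rel: "equiv B (conn_rel B args)"
proof (rule equivI)
  show "refl_on B (conn_rel B args)" by (rule refl_onI) (rule conn_rel_refl)
  have "sym (Id_on B \<union> adj_rel B args)" unfolding sym_def adj_rel_def by auto
  then show "sym (conn_rel B args)" unfolding conn_rel_def by (rule sym_trancl)
  show "trans (conn_rel B args)" unfolding conn_rel_def by (rule trans_trancl)
qed (rule conn_rel_subset)

lemma conn_rel_mono: "B \<subseteq> A \<Longrightarrow> conn_rel B args \<subseteq> conn_rel A args"
  unfolding conn_rel_def adj_rel_def by (rule trancl_mono_subset) auto

lemma conn_rel_induct [consumes 1, case_names base adj]:
  assumes "(r, s) \<in> conn_rel A args" "P r"
    and "\<And>v w x. P v \<Longrightarrow> v \<in> A \<Longrightarrow> w \<in> A \<Longrightarrow> x \<in> set (args v) \<Longrightarrow> x \<in> set (args w) \<Longrightarrow> P w"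
  shows "P s"
proof -
  have "P w" if "P v" "(v, w) \<in> Id_on A \<union> adj_rel A args" for v w
    using that(2)
  proof
    assume "(v, w) \<in> Id_on A"
    with that(1) show ?thesis by auto
  next
    assume "(v, w) \<in> adj_rel A args"
    then obtain x where "v \<in> A" "w \<in> A" "x \<in> set (args v)" "x \<in> set (args w)"
      unfolding adj_rel_def by auto
    then show ?thesis by (rule assms(3)[OF that(1)])
  qed
  with assms(1,2) show ?thesis
    unfolding conn_rel_def by (induction rule: trancl_induct) blast+
qed

lemma conn_rel_Image_closed_subset:
  assumes "B \<subseteq> A" and "u \<in> B"
    and closed: "\<And>v w. v \<in> B \<Longrightarrow> w \<in> A \<Longrightarrow> set (args v) \<inter> set (args w) \<noteq> {} \<Longrightarrow> w \<in> B"
  shows "conn_rel A args `` {u} = conn_rel B args `` {u}"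
proof
  have "w \<in> B \<and> (u, w) \<in> conn_rel B args" if "(u, w) \<in> conn_rel A args" for w
    using that
  proof (induction rule: conn_rel_induct)
    case base
    show ?case using conn_rel_refl[OF \<open>u \<in> B\<close>] \<open>u \<in> B\<close> by blast
  next
    case (adj v w x)
    have "w \<in> B" by (rule closed) (use adj in blast)+
    with adj have "(v, w) \<in> conn_rel B args" by (intro conn_rel_adjI) blast+
    with adj(1) show ?case using \<open>w \<in> B\<close> conn_rel_trans[of u v B args w] by blast
  qed
  then show "conn_rel A args `` {u} \<subseteq> conn_rel B args `` {u}" by blast
  show "conn_rel B args `` {u} \<subseteq> conn_rel A args `` {u}"
    by (rule Image_mono[OF conn_rel_mono[OF \<open>B \<subseteq> A\<close>] subset_refl])
qed

lemma components_subset: "D \<in> components A args \<Longrightarrow> D \<subseteq> A"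
  unfolding components_def by (rule in_quotient_imp_subset[OF equiv_conn_rel])

lemma components_nonempty: "D \<in> components A args \<Longrightarrow> D \<noteq> {}"
  unfolding components_def by (rule in_quotient_imp_non_empty[OF equiv_conn_rel])

lemma components_disjoint:
  "C \<in> components A args \<Longrightarrow> D \<in> components A args \<Longrightarrow> C \<noteq> D \<Longrightarrow> C \<inter> D = {}"
  unfolding components_def using quotient_disj[OF equiv_conn_rel] by blast

lemma Union_components: "\<Union>(components A args) = A"
  unfolding components_def by (rule Union_quotient[OF equiv_conn_rel])

lemma finite_components: "finite A \<Longrightarrow> finite (components A args)"
  unfolding components_def by (rule finite_quotient[OF _ conn_rel_subset])

lemma conn_rel_Image_in_components: "u \<in> A \<Longrightarrow> conn_rel A args `` {u} \<in> components A args"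
  unfolding components_def by (rule quotientI)

lemma conn_rel_Image_self: "u \<in> A \<Longrightarrow> u \<in> conn_rel A args `` {u}"
  by (simp add: conn_rel_refl)

lemma components_eq_conn_rel_Image:
  assumes "D \<in> components A args" and "u \<in> D"
  shows "D = conn_rel A args `` {u}"
proof -
  from assms(1) obtain x where "x \<in> A" and D: "D = conn_rel A args `` {x}"
    unfolding components_def by (auto elim: quotientE)
  with assms(2) have "(x, u) \<in> conn_rel A args" by simp
  with D show ?thesis using equiv_class_eq[OF equiv_conn_rel] by simp
qed

lemma components_closed_adj:
  assumes "D \<in> components A args" "u \<in> D" "v \<in> A" "set (args u) \<inter> set (args v) \<noteq> {}"
  shows "v \<in> D"
proof -
  have "u \<in> A" using components_subset[OF assms(1)] assms(2) by blast
  then have "(u, v) \<in> conn_rel A args" by (rule conn_rel_adjI[OF _ assms(3,4)])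
  with assms(1,2) show ?thesis
    unfolding components_def by (rule in_quotient_imp_closed[OF equiv_conn_rel])
qed

lemma finite_qvars: "finite A \<Longrightarrow> finite (qvars A args)"
  unfolding qvars_def by auto

lemma qvars_mono: "B \<subseteq> A \<Longrightarrow> qvars B args \<subseteq> qvars A args"
  unfolding qvars_def by auto

lemma qvars_Un: "qvars (X \<union> Y) args = qvars X args \<union> qvars Y args"
  unfolding qvars_def by blast

lemma qvars_eq_UN_components: "qvars A args = (\<Union>C\<in>components A args. qvars C args)"
proof -
  have "(\<Union>r\<in>\<Union>(components A args). set (args r)) = (\<Union>C\<in>components A args. \<Union>r\<in>C. set (args r))"
    by blast
  then show ?thesis unfolding qvars_def Union_components .
qed

lemma components_qvars_atom:
  assumes "C \<in> components A args" "x \<in> qvars C args" "r \<in> A" "x \<in> set (args r)"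
  shows "r \<in> C"
proof -
  obtain u where "u \<in> C" "x \<in> set (args u)" using assms(2) unfolding qvars_def by blast
  then show ?thesis using components_closed_adj[OF assms(1) _ assms(3)] assms(4) by blast
qed

lemma components_qvars_disjoint:
  assumes "C \<in> components A args" "D \<in> components A args" "C \<noteq> D"
  shows "qvars C args \<inter> qvars D args = {}"
proof -
  have "x \<notin> qvars D args" if "x \<in> qvars C args" for x
  proof
    assume "x \<in> qvars D args"
    then obtain v where "v \<in> D" "x \<in> set (args v)" unfolding qvars_def by blast
    then have "v \<in> C" using components_qvars_atom[OF assms(1) that] components_subset[OF assms(2)]
      by blast
    with \<open>v \<in> D\<close> show False using components_disjoint[OF assms] by blast
  qed
  then show ?thesis by blast
qed

lemma components_of_component:
  assumes "D \<in> components A args"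
  shows "components D args = {D}"
proof -
  have "conn_rel D args `` {u} = D" if "u \<in> D" for u
  proof -
    have "conn_rel A args `` {u} = conn_rel D args `` {u}"
      by (rule conn_rel_Image_closed_subset[OF components_subset[OF assms] that])
        (rule components_closed_adj[OF assms])
    then show ?thesis using components_eq_conn_rel_Image[OF assms that] by simp
  qed
  moreover obtain u where "u \<in> D" using components_nonempty[OF assms] by blast
  ultimately have "(\<Union>x\<in>D. {conn_rel D args `` {x}}) = {D}" by (intro UN_constant_eq) simp_all
  then show ?thesis unfolding components_def quotient_def .
qed

lemma component_of_closed_component:
  assumes "C \<in> components B args" "B \<subseteq> A"
    and closed: "\<And>v w. v \<in> C \<Longrightarrow> w \<in> A \<Longrightarrow> set (args v) \<inter> set (args w) \<noteq> {} \<Longrightarrow> w \<in> C"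
  shows "C \<in> components A args"
proof -
  obtain u where u: "u \<in> C" using components_nonempty[OF assms(1)] by blast
  have CA: "C \<subseteq> A" using components_subset[OF assms(1)] assms(2) by blast
  have "conn_rel A args `` {u} = conn_rel C args `` {u}"
    by (rule conn_rel_Image_closed_subset[OF CA u closed])
  then have "conn_rel A args `` {u} \<subseteq> C" using conn_rel_subset[of C args] by blast
  moreover have "C \<subseteq> conn_rel A args `` {u}"
    by (subst components_eq_conn_rel_Image[OF assms(1) u])
      (rule Image_mono[OF conn_rel_mono[OF assms(2)] subset_refl])
  ultimately have "C = conn_rel A args `` {u}" by blast
  moreover have "u \<in> A" using u CA by blast
  ultimately show ?thesis by (simp add: conn_rel_Image_in_components)
qed

section \<open>Contracted variables\<close>

lemma contr_var_component:
  assumes "C \<in> components M args" and "x \<in> qvars C args"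
  shows "contr_var M args x = qvars C args"
proof -
  have "(THE C. C \<in> components M args \<and> x \<in> qvars C args) = C"
    using assms components_qvars_disjoint by (intro the_equality) blast+
  then show ?thesis unfolding contr_var_def using assms by auto
qed

lemma contr_var_outside: "x \<notin> qvars M args \<Longrightarrow> contr_var M args x = {x}"
  unfolding contr_var_def using qvars_eq_UN_components[of M args] by auto

lemma contr_var_cases:
  obtains (component) C where "C \<in> components M args" "x \<in> qvars C args"
      "contr_var M args x = qvars C args"
  | (outside) "x \<notin> qvars M args" "contr_var M args x = {x}"
proof (cases "x \<in> qvars M args")
  case True
  then obtain C where C: "C \<in> components M args" "x \<in> qvars C args"
    unfolding qvars_eq_UN_components[of M args] by (rule UN_E)
  show ?thesis by (rule component[OF C contr_var_component[OF C]])
next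
  case False
  show ?thesis by (rule outside[OF False contr_var_outside[OF False]])
qed

lemma contr_var_self: "x \<in> contr_var M args x"
  by (cases rule: contr_var_cases[of M args x]) simp_all

lemma contr_var_eqI: "z \<in> contr_var M args x \<Longrightarrow> contr_var M args z = contr_var M args x"
  by (cases rule: contr_var_cases[of M args x]) (simp_all add: contr_var_component)

lemma inj_on_some_elem:
  assumes "{} \<notin> S" and "\<And>X Y. X \<in> S \<Longrightarrow> Y \<in> S \<Longrightarrow> X \<inter> Y \<noteq> {} \<Longrightarrow> X = Y"
  shows "inj_on (\<lambda>X. SOME x. x \<in> X) S"
proof (rule inj_onI)
  fix X Y assume XY: "X \<in> S" "Y \<in> S" and eq: "(SOME x. x \<in> X) = (SOME x. x \<in> Y)"
  have "(SOME x. x \<in> Z) \<in> Z" if "Z \<in> S" for Z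
    using assms(1) that by (metis all_not_in_conv someI_ex)
  with XY eq have "X \<inter> Y \<noteq> {}" by (metis IntI empty_iff)
  with XY show "X = Y" by (rule assms(2))
qed

lemma chi_map_inj:
  assumes inj: "inj_on f (qvars A args)"
  shows "chi A (\<lambda>r. map f (args r)) = chi A args"
proof -
  let ?args = "\<lambda>r. map f (args r)"
  have "(f ` set (args r) \<inter> f ` set (args s) \<noteq> {}) = (set (args r) \<inter> set (args s) \<noteq> {})"
    if "r \<in> A" "s \<in> A" for r s
  proof -
    have "f ` (set (args r) \<inter> set (args s)) = f ` set (args r) \<inter> f ` set (args s)"
      by (rule inj_on_image_Int[OF inj]) (use that in \<open>auto simp: qvars_def\<close>)
    then show ?thesis by (metis image_is_empty)
  qed
  then have "adj_rel A ?args = adj_rel A args" unfolding adj_rel_def by auto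
  then have "components A ?args = components A args"
    unfolding components_def conn_rel_def by simp
  moreover have "qvars A ?args = f ` qvars A args" unfolding qvars_def by auto
  ultimately show ?thesis unfolding chi_def using card_image[OF inj] by simp
qed

lemma chi_contr_args_some_elem:
  "chi B (\<lambda>r. map (\<lambda>X. SOME x. x \<in> X) (contr_args M args r)) = chi B (contr_args M args)"
proof (rule chi_map_inj, rule inj_on_some_elem)
  have range: "qvars B (contr_args M args) \<subseteq> range (contr_var M args)"
    unfolding qvars_def contr_args_def by auto
  then show "{} \<notin> qvars B (contr_args M args)"
    using contr_var_self by fastforce
  fix X Y assume "X \<in> qvars B (contr_args M args)" "Y \<in> qvars B (contr_args M args)"
    and "X \<inter> Y \<noteq> {}"
  then obtain x y z where "X = contr_var M args x" "Y = contr_var M args y"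
    and "z \<in> contr_var M args x" "z \<in> contr_var M args y"
    using range by blast
  then show "X = Y" using contr_var_eqI by metis
qed

section \<open>Connectivity of a contraction\<close>

lemma conn_rel_through_component:
  assumes "C \<in> components M args" "M \<subseteq> A" "u \<in> A" "v \<in> A"
    and "x \<in> set (args u)" "y \<in> set (args v)" "x \<in> qvars C args" "y \<in> qvars C args"
  shows "(u, v) \<in> conn_rel A args"
proof -
  obtain m1 m2 where m: "m1 \<in> C" "x \<in> set (args m1)" "m2 \<in> C" "y \<in> set (args m2)"
    using assms(7,8) unfolding qvars_def by blast
  have CA: "C \<subseteq> A" using components_subset[OF assms(1)] assms(2) by blast
  have "(m1, m2) \<in> conn_rel M args" using components_eq_conn_rel_Image[OF assms(1) m(1)] m(3) by blast
  then have "(m1, m2) \<in> conn_rel A args" using conn_rel_mono[OF assms(2)] by blast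
  moreover have "(u, m1) \<in> conn_rel A args" "(m2, v) \<in> conn_rel A args"
    using assms(3-6) m CA by (blast intro: conn_rel_adjI)+
  ultimately show ?thesis using conn_rel_trans by metis
qed

lemma conn_rel_contr_subset:
  assumes "M \<subseteq> A"
  shows "conn_rel (A - M) (contr_args M args) \<subseteq> conn_rel A args"
proof -
  have "(u, v) \<in> conn_rel A args" if "(u, v) \<in> adj_rel (A - M) (contr_args M args)" for u v
  proof -
    have "u \<in> A - M" "v \<in> A - M"
      and "set (contr_args M args u) \<inter> set (contr_args M args v) \<noteq> {}"
      using that unfolding adj_rel_def by auto
    then obtain x y where uv: "u \<in> A" "v \<in> A" "x \<in> set (args u)" "y \<in> set (args v)"
      and xy: "contr_var M args x = contr_var M args y"
      unfolding contr_args_def by fastforce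
    have y: "y \<in> contr_var M args x" using xy contr_var_self[of y M args] by simp
    show ?thesis
    proof (cases rule: contr_var_cases[of M args x])
      case (component C)
      then show ?thesis using conn_rel_through_component[OF component(1) assms uv component(2)] y
        by simp
    next
      case outside
      then have "x \<in> set (args u) \<inter> set (args v)" using uv(3,4) y by simp
      then show ?thesis by (intro conn_rel_adjI uv(1,2)) blast
    qed
  qed
  then have "Id_on (A - M) \<union> adj_rel (A - M) (contr_args M args) \<subseteq> conn_rel A args"
    by (auto intro: conn_rel_refl)
  then have "conn_rel (A - M) (contr_args M args) \<subseteq> (conn_rel A args)\<^sup>+"
    unfolding conn_rel_def[of "A - M"] by (rule trancl_mono_subset)
  then show ?thesis unfolding conn_rel_def[of A] by (simp only: trancl_id[OF trans_trancl])
qed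

lemma contr_var_eq_in_atom:
  assumes "v \<in> M" "x \<in> set (args v)" "y \<in> set (args v)"
  shows "contr_var M args x = contr_var M args y"
proof -
  have C: "conn_rel M args `` {v} \<in> components M args"
    by (rule conn_rel_Image_in_components[OF assms(1)])
  have "z \<in> qvars (conn_rel M args `` {v}) args" if "z \<in> set (args v)" for z
    using conn_rel_Image_self[OF assms(1)] that unfolding qvars_def by blast
  then show ?thesis using contr_var_component[OF C] assms(2,3) by metis
qed

text \<open>The atoms reached from r are those of the q/M-component R of r and those having a
  contracted variable that occurs in R. This property propagates along adjacency in q
  because all variables of an atom of M are contracted to the same variable.\<close>

lemma conn_rel_imp_conn_rel_contr:
  assumes "M \<subseteq> A" "r \<in> A - M" "(r, s) \<in> conn_rel A args" "s \<notin> M"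
  shows "(r, s) \<in> conn_rel (A - M) (contr_args M args)"
proof -
  define R where "R = conn_rel (A - M) (contr_args M args) `` {r}"
  define W where "W = qvars R (contr_args M args)"
  define reached where "reached v \<longleftrightarrow> v \<in> R \<or> contr_var M args ` set (args v) \<inter> W \<noteq> {}" for v
  have into_R: "w \<in> R" if w: "w \<in> A - M" "contr_var M args ` set (args w) \<inter> W \<noteq> {}" for w
  proof -
    obtain v where "v \<in> R" and "set (contr_args M args v) \<inter> set (contr_args M args w) \<noteq> {}"
      using w(2) unfolding W_def qvars_def contr_args_def by auto
    moreover have "v \<in> A - M" using \<open>v \<in> R\<close> conn_rel_subset unfolding R_def by blast
    ultimately show ?thesis
      using w(1) conn_rel_adjI conn_rel_trans unfolding R_def by (metis Image_singleton_iff)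
  qed
  have "reached s" using assms(3)
  proof (induction rule: conn_rel_induct)
    case base
    show ?case unfolding reached_def R_def using conn_rel_refl[OF assms(2)] by blast
  next
    case (adj v w x)
    have "contr_var M args x \<in> W"
    proof (cases "v \<in> R")
      case True
      then show ?thesis using adj(4) unfolding W_def qvars_def contr_args_def by auto
    next
      case False
      then obtain y where y: "y \<in> set (args v)" "contr_var M args y \<in> W"
        using adj(1) unfolding reached_def by blast
      have "v \<in> M" using False into_R[of v] adj(2) y by blast
      then show ?thesis using contr_var_eq_in_atom[of v M x args y] adj(4) y by simp
    qed
    then show ?case unfolding reached_def using adj(5) by blast
  qed
  then show ?thesis using into_R[of s] assms(3,4) conn_rel_subset unfolding reached_def R_def
    by blast
qed

lemma conn_rel_contr_Image:
  assumes "M \<subseteq> A" "r \<in> A - M"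
  shows "conn_rel (A - M) (contr_args M args) `` {r} = conn_rel A args `` {r} - M"
proof
  show "conn_rel (A - M) (contr_args M args) `` {r} \<subseteq> conn_rel A args `` {r} - M"
    using conn_rel_contr_subset[OF assms(1)] conn_rel_subset[of "A - M" "contr_args M args"]
    by blast
  show "conn_rel A args `` {r} - M \<subseteq> conn_rel (A - M) (contr_args M args) `` {r}"
    using conn_rel_imp_conn_rel_contr[OF assms] by blast
qed

lemma bij_betw_components_contr:
  assumes "M \<subseteq> A"
  shows "bij_betw (\<lambda>D. D - M) {D \<in> components A args. \<not> D \<subseteq> M}
    (components (A - M) (contr_args M args))"
proof (rule bij_betwI')
  fix D1 D2 assume "D1 \<in> {D \<in> components A args. \<not> D \<subseteq> M}" "D2 \<in> {D \<in> components A args. \<not> D \<subseteq> M}"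
  then show "(D1 - M = D2 - M) = (D1 = D2)" using components_disjoint[of D1 A args D2] by blast
next
  fix D assume D: "D \<in> {D \<in> components A args. \<not> D \<subseteq> M}"
  then obtain r where r: "r \<in> D" "r \<notin> M" by blast
  have DA: "D \<in> components A args" using D by blast
  have rA: "r \<in> A - M" using components_subset[OF DA] r by blast
  have "D - M = conn_rel (A - M) (contr_args M args) `` {r}"
    using conn_rel_contr_Image[OF assms rA, of args] components_eq_conn_rel_Image[OF DA r(1)] by simp
  then show "D - M \<in> components (A - M) (contr_args M args)"
    using conn_rel_Image_in_components[OF rA] by simp
next
  fix E assume "E \<in> components (A - M) (contr_args M args)"
  then obtain r where rA: "r \<in> A - M" and E: "E = conn_rel (A - M) (contr_args M args) `` {r}"
    unfolding components_def by (auto elim: quotientE)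
  have "conn_rel A args `` {r} \<in> {D \<in> components A args. \<not> D \<subseteq> M}"
    using conn_rel_Image_in_components[of r A args] conn_rel_Image_self[of r A args] rA by blast
  moreover have "E = conn_rel A args `` {r} - M" using conn_rel_contr_Image[OF assms rA, of args] E by simp
  ultimately show "\<exists>D\<in>{D \<in> components A args. \<not> D \<subseteq> M}. E = D - M" by blast
qed

lemma components_subset_eq:
  assumes "M \<subseteq> A"
  shows "{D \<in> components A args. D \<subseteq> M} =
    {C \<in> components M args. qvars C args \<inter> qvars (A - M) args = {}}"
proof (intro equalityI subsetI)
  fix D assume "D \<in> {D \<in> components A args. D \<subseteq> M}"
  then have DA: "D \<in> components A args" and DM: "D \<subseteq> M" by auto
  have "D \<in> components M args"
  proof (rule component_of_closed_component[OF _ DM])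
    show "D \<in> components D args" using components_of_component[OF DA] by simp
  qed (use components_closed_adj[OF DA] assms in blast)
  moreover have "qvars D args \<inter> qvars (A - M) args = {}"
    using components_qvars_atom[OF DA] DM unfolding qvars_def by blast
  ultimately show "D \<in> {C \<in> components M args. qvars C args \<inter> qvars (A - M) args = {}}" by blast
next
  fix C assume "C \<in> {C \<in> components M args. qvars C args \<inter> qvars (A - M) args = {}}"
  then have CM: "C \<in> components M args" and dis: "qvars C args \<inter> qvars (A - M) args = {}" by auto
  have "w \<in> C" if "v \<in> C" "w \<in> A" "set (args v) \<inter> set (args w) \<noteq> {}" for v w
  proof (cases "w \<in> M")
    case True
    then show ?thesis by (rule components_closed_adj[OF CM that(1) _ that(3)])
  next
    case False
    then show ?thesis using dis that unfolding qvars_def by blast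
  qed
  then have "C \<in> components A args" by (rule component_of_closed_component[OF CM assms])
  then show "C \<in> {D \<in> components A args. D \<subseteq> M}" using components_subset[OF CM] by blast
qed

section \<open>The characteristic\<close>

lemma qvars_contr:
  "qvars B (contr_args M args) = (\<lambda>x. {x}) ` (qvars B args - qvars M args)
     \<union> (\<lambda>C. qvars C args) ` {C \<in> components M args. qvars C args \<inter> qvars B args \<noteq> {}}"
  (is "_ = ?singletons \<union> ?components")
proof -
  have "qvars B (contr_args M args) = contr_var M args ` qvars B args"
    unfolding qvars_def contr_args_def by auto
  also have "\<dots> = ?singletons \<union> ?components"
  proof (intro equalityI subsetI)
    fix X assume "X \<in> contr_var M args ` qvars B args"
    then obtain x where x: "x \<in> qvars B args" "X = contr_var M args x" by blast
    then show "X \<in> ?singletons \<union> ?components"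
      by (cases rule: contr_var_cases[of M args x]) blast+
  next
    fix X assume "X \<in> ?singletons \<union> ?components"
    then consider x where "x \<in> qvars B args" "x \<notin> qvars M args" "X = {x}"
      | C x where "C \<in> components M args" "x \<in> qvars C args" "x \<in> qvars B args" "X = qvars C args"
      by blast
    then show "X \<in> contr_var M args ` qvars B args"
    proof cases
      case (1 x)
      then show ?thesis using contr_var_outside[of x M args] by (metis image_eqI)
    next
      case (2 C x)
      then show ?thesis using contr_var_component[of C M args x] by (metis image_eqI)
    qed
  qed
  finally show ?thesis .
qed

lemma card_qvars_contr:
  assumes "finite A" "M \<subseteq> A"
  shows "card (qvars (A - M) (contr_args M args)) + card (qvars M args) =
    card (qvars A args) + card {C \<in> components M args. qvars C args \<inter> qvars (A - M) args \<noteq> {}}"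
proof -
  define V where "V = qvars (A - M) args"
  define T where "T = {C \<in> components M args. qvars C args \<inter> V \<noteq> {}}"
  have fin: "finite V" "finite (qvars M args)" "finite T"
    using assms finite_components[of M args] unfolding V_def T_def
    by (auto intro: finite_qvars finite_subset)
  have T_sub: "qvars C args \<subseteq> qvars M args" if "C \<in> T" for C
    by (rule qvars_mono[OF components_subset[of C M args]]) (use that in \<open>simp add: T_def\<close>)
  have "inj_on (\<lambda>C. qvars C args) T"
    using components_qvars_disjoint unfolding T_def by (fastforce intro: inj_onI)
  moreover have "(\<lambda>x. {x}) ` (V - qvars M args) \<inter> (\<lambda>C. qvars C args) ` T = {}"
    using T_sub unfolding T_def by fastforce
  ultimately have "card (qvars (A - M) (contr_args M args)) = card (V - qvars M args) + card T"
    using fin unfolding qvars_contr V_def[symmetric] T_def[symmetric]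
    by (simp add: card_Un_disjoint card_image)
  moreover have "card (qvars A args) = card (V - qvars M args) + card (qvars M args)"
  proof -
    have "qvars A args = (V - qvars M args) \<union> qvars M args"
      using qvars_Un[of "A - M" M args] assms(2) unfolding V_def by (simp add: Un_absorb2)
    then show ?thesis by (simp only:) (rule card_Un_disjoint; use fin in auto)
  qed
  ultimately show ?thesis unfolding T_def V_def by simp
qed

lemma card_components_contr:
  assumes "finite A" "M \<subseteq> A"
  shows "card (components (A - M) (contr_args M args)) + card (components M args) =
    card (components A args) + card {C \<in> components M args. qvars C args \<inter> qvars (A - M) args \<noteq> {}}"
proof -
  define T where "T = {C \<in> components M args. qvars C args \<inter> qvars (A - M) args \<noteq> {}}"
  have fin: "finite (components A args)" "finite (components M args)"
    using assms by (auto intro: finite_components finite_subset)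
  have "card (components A args) =
      card {D \<in> components A args. D \<subseteq> M} + card {D \<in> components A args. \<not> D \<subseteq> M}"
    using fin(1) by (subst card_Un_disjoint[symmetric]) (auto intro: arg_cong[where f = card])
  also have "card {D \<in> components A args. \<not> D \<subseteq> M} = card (components (A - M) (contr_args M args))"
    by (rule bij_betw_same_card[OF bij_betw_components_contr[OF assms(2)]])
  also have "{D \<in> components A args. D \<subseteq> M} = components M args - T"
    unfolding components_subset_eq[OF assms(2)] T_def by blast
  also have "card (components M args - T) = card (components M args) - card T"
    using fin(2) by (intro card_Diff_subset) (auto simp: T_def)
  finally show ?thesis
    using card_mono[OF fin(2), of T] unfolding T_def by auto
qed

lemma chi_contr:
  assumes "finite A" "M \<subseteq> A"
  shows "chi (A - M) (contr_args M args) = chi A args - chi M args"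
proof -
  have "card (A - M) + card M = card A"
    using assms card_Diff_subset[of M A] card_mono[of A M] finite_subset[of M A] by auto
  moreover have "(\<Sum>r\<in>A - M. int (length (args r))) + (\<Sum>r\<in>M. int (length (args r))) =
      (\<Sum>r\<in>A. int (length (args r)))"
    by (rule sum.subset_diff[OF assms(2,1), symmetric])
  ultimately show ?thesis
    using card_qvars_contr[OF assms, of args] card_components_contr[OF assms, of args]
    unfolding chi_def contr_args_def by simp
qed

lemma chi_components:
  assumes "finite A"
  shows "chi A args = (\<Sum>C\<in>components A args. chi C args)"
proof -
  let ?K = "components A args"
  have finK: "finite ?K" by (rule finite_components[OF assms])
  have finC: "\<forall>C\<in>?K. finite C"
    using finite_subset[OF components_subset assms] by blast
  have disj: "\<forall>C\<in>?K. \<forall>D\<in>?K. C \<noteq> D \<longrightarrow> C \<inter> D = {}"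
    using components_disjoint[of _ A args] by blast
  have A: "(\<Union>C\<in>?K. C) = A" using Union_components[of A args] by simp
  have "card A = (\<Sum>C\<in>?K. card C)"
    using card_UN_disjoint[OF finK finC disj] A by simp
  moreover have "card (qvars A args) = (\<Sum>C\<in>?K. card (qvars C args))"
    unfolding qvars_eq_UN_components[of A args]
    by (rule card_UN_disjoint[OF finK])
      (use finC finite_qvars components_qvars_disjoint[of _ A args] in blast)+
  moreover have "(\<Sum>r\<in>A. int (length (args r))) = (\<Sum>C\<in>?K. \<Sum>r\<in>C. int (length (args r)))"
    using sum.UNION_disjoint[OF finK finC disj] A by simp
  moreover have "card ?K = (\<Sum>C\<in>?K. card (components C args))"
    using components_of_component[of _ A args] by simp
  ultimately show ?thesis unfolding chi_def by (simp add: sum_subtractf sum.distrib)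
qed

lemma chi_singleton_nonpos: "chi {r} args \<le> 0"
proof -
  have "components {r} args = {{r}}"
    using conn_rel_subset[of "{r}" args] conn_rel_refl[of r "{r}" args]
    unfolding components_def singleton_quotient by blast
  moreover have "qvars {r} args = set (args r)" unfolding qvars_def by simp
  ultimately show ?thesis unfolding chi_def using card_length[of "args r"] by simp
qed

text \<open>The variables of q/{r} are sets of variables of q; choosing a representative of each
  (they are pairwise disjoint) renames q/{r} back to variable type 'v, so that the induction
  hypothesis applies to it.\<close>

lemma chi_nonpos:
  assumes "finite A"
  shows "chi A args \<le> 0"
  using assms
proof (induction A arbitrary: args rule: finite_induct)
  case empty
  then show ?case unfolding chi_def qvars_def components_def by simp
next
  case (insert r A)
  let ?rep_args = "\<lambda>s. map (\<lambda>X. SOME x. x \<in> X) (contr_args {r} args s)"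
  have "chi A (contr_args {r} args) = chi A ?rep_args"
    by (rule chi_contr_args_some_elem[symmetric])
  also have "\<dots> \<le> 0" by (rule insert.IH)
  finally have "chi (insert r A - {r}) (contr_args {r} args) \<le> 0"
    using insert.hyps(2) by simp
  then show ?case
    using chi_contr[of "insert r A" "{r}" args] chi_singleton_nonpos[of r args] insert.hyps(1)
    by simp
qed

theorem lemma1:
  fixes A :: "'r set" and args :: "'r \<Rightarrow> 'v list"
  assumes "finite A"
  shows "chi A args = (\<Sum>C\<in>components A args. chi C args)
    \<and> (\<forall>M. M \<subseteq> A \<longrightarrow>
          chi (contr_atoms A M) (contr_args M args) = chi A args - chi M args)
    \<and> chi A args \<le> 0
    \<and> (\<forall>M. M \<subseteq> A \<longrightarrow> chi A args \<le> chi (contr_atoms A M) (contr_args M args))"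
proof (intro conjI allI impI)
  show "chi A args = (\<Sum>C\<in>components A args. chi C args)" by (rule chi_components[OF assms])
  show "chi A args \<le> 0" by (rule chi_nonpos[OF assms])
  fix M assume M: "M \<subseteq> A"
  show contr: "chi (contr_atoms A M) (contr_args M args) = chi A args - chi M args"
    unfolding contr_atoms_def by (rule chi_contr[OF assms M])
  have "chi M args \<le> 0" by (rule chi_nonpos[OF finite_subset[OF M assms]])
  with contr show "chi A args \<le> chi (contr_atoms A M) (contr_args M args)" by simp
qed

end
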